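(* For every formula $\phi\in\mathbf{LTL}(\mathbf{X},\wedge)$ there exists a pattern $P$ which is equivalent to $\phi$ (i.e. for every word $w$ and position $i$, $w,i\models P$ iff $w,i\models\phi$) and whose size is at most the size of $\phi$.
   Context: Alphabet $\Sigma=\{a,b\}$. Words are nonempty, indexed from position 1; $w(i)$ is the letter at position $i$. $\mathbf{LTL}(\mathbf{X},\wedge)$ consists of formulas built from atomic formulas $c\in\Sigma$, conjunction $\wedge$ and the next operator $\mathbf{X}$. Semantics on a word $w$ of length $\ell$, position $i\in[1,\ell]$: $w,i\models c$ iff $w(i)=c$; $w,i\models\phi_1\wedge\phi_2$ iff both hold; $w,i\models\mathbf{X}\phi$ iff $i<\ell$ and $w,i+1\models\phi$. The size of a formula is the number of nodes of its syntax tree; $\mathbf{X}^i$ denotes $i$ nested applications of $\mathbf{X}$ (each contributing 1 to the size). Patterns are the formulas generated by the grammar $P ::= \mathbf{X}^i c \mid \mathbf{X}^i(c\wedge P)$ with $i\ge 0$, $c\in\Sigma$. Equivalently a pattern has the form $\mathbf{X}^{i_1-1}(c_1\wedge\mathbf{X}^{i_2-i_1}(\cdots\wedge\mathbf{X}^{i_p-i_{p-1}}c_p)\cdots)$ with $1\le i_1<\dots<i_p$ and $c_q\in\Sigma$; it has size $i_p+2(p-1)$. (A formula such as $a\wedge b$ is also a pattern and is unsatisfiable.) *)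

theory Defs
  imports Main
begin

datatype letter = La | Lb

datatype ltl = Atom letter | Conj ltl ltl | Nxt ltl

text \<open>Words are nonempty lists; positions are 1-based, w(i) = w ! (i - 1).
  Satisfaction is only meaningful for 1 \<le> i \<le> length w.\<close>
fun sat :: "letter list \<Rightarrow> nat \<Rightarrow> ltl \<Rightarrow> bool" where
  "sat w i (Atom c) = (w ! (i - 1) = c)"
| "sat w i (Conj p q) = (sat w i p \<and> sat w i q)"
| "sat w i (Nxt p) = (i < length w \<and> sat w (i + 1) p)"

fun fsize :: "ltl \<Rightarrow> nat" where
  "fsize (Atom c) = 1"
| "fsize (Conj p q) = fsize p + fsize q + 1"
| "fsize (Nxt p) = fsize p + 1"

fun Xpow :: "nat \<Rightarrow> ltl \<Rightarrow> ltl" where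
  "Xpow 0 p = p"
| "Xpow (Suc n) p = Nxt (Xpow n p)"

inductive is_pattern :: "ltl \<Rightarrow> bool" where
  pat_atom: "is_pattern (Xpow i (Atom c))"
| pat_conj: "is_pattern P \<Longrightarrow> is_pattern (Xpow i (Conj (Atom c) P))"

end

theory Submission
  imports Defs
begin

text \<open>A formula of LTL(X, and) is a conjunction of constraints "the letter at offset d is c";
  its size is at least the largest offset plus twice the number of constraints, minus one.
  Sorting the constraints by offset and chaining them with X-steps between consecutive offsets
  gives a pattern of exactly that size, with the same meaning.\<close>

lemma sat_Xpow:
  "i \<le> length w \<Longrightarrow> sat w i (Xpow n p) \<longleftrightarrow> i + n \<le> length w \<and> sat w (i + n) p"
  by (induction n arbitrary: i) auto

lemma fsize_Xpow: "fsize (Xpow n p) = n + fsize p"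
  by (induction n) auto

definition sat_constraints :: "letter list \<Rightarrow> nat \<Rightarrow> (nat \<times> letter) list \<Rightarrow> bool" where
  "sat_constraints w i L \<longleftrightarrow> (\<forall>(d, c) \<in> set L. i + d \<le> length w \<and> w ! (i + d - 1) = c)"

fun constraints :: "ltl \<Rightarrow> (nat \<times> letter) list" where
  "constraints (Atom c) = [(0, c)]"
| "constraints (Conj p q) = constraints p @ constraints q"
| "constraints (Nxt p) = map (\<lambda>(d, c). (Suc d, c)) (constraints p)"

fun next_depth :: "ltl \<Rightarrow> nat" where
  "next_depth (Atom c) = 0"
| "next_depth (Conj p q) = max (next_depth p) (next_depth q)"
| "next_depth (Nxt p) = Suc (next_depth p)"

lemma constraints_nonempty: "constraints \<phi> \<noteq> []"
  by (induction \<phi>) auto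

lemma constraint_offset_le_next_depth: "(d, c) \<in> set (constraints \<phi>) \<Longrightarrow> d \<le> next_depth \<phi>"
  by (induction \<phi> arbitrary: d) (auto simp: max.coboundedI1 max.coboundedI2)

lemma next_depth_length_constraints_le_fsize:
  "next_depth \<phi> + 2 * length (constraints \<phi>) \<le> fsize \<phi> + 1"
  by (induction \<phi>) auto

lemma sat_constraints_append:
  "sat_constraints w i (L @ M) \<longleftrightarrow> sat_constraints w i L \<and> sat_constraints w i M"
  unfolding sat_constraints_def set_append by (rule ball_Un)

lemma sat_constraints_shift:
  "sat_constraints w i (map (\<lambda>(d, c). (Suc d, c)) L) \<longleftrightarrow> sat_constraints w (i + 1) L"
  by (auto simp: sat_constraints_def)

lemma sat_iff_sat_constraints:
  assumes "1 \<le> i" "i \<le> length w"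
  shows "sat w i \<phi> \<longleftrightarrow> sat_constraints w i (constraints \<phi>)"
  using assms
proof (induction \<phi> arbitrary: i)
  case (Atom c)
  then show ?case by (simp add: sat_constraints_def)
next
  case (Conj p q)
  then show ?case by (simp add: sat_constraints_append)
next
  case (Nxt p)
  show ?case
  proof (cases "i < length w")
    case True
    then show ?thesis using Nxt by (simp add: sat_constraints_shift)
  next
    case False
    \<comment> \<open>at the last position every shifted constraint points past the end of the word\<close>
    obtain d c where "(d, c) \<in> set (constraints p)"
      using constraints_nonempty[of p] by (metis list.set_intros(1) neq_Nil_conv surj_pair)
    then show ?thesis
      using False by (force simp: sat_constraints_def)
  qed
qed

text \<open>In \<open>pattern_of b x L\<close>, \<open>b\<close> is the offset already reached by the enclosing X-steps.\<close>

fun pattern_of :: "nat \<Rightarrow> nat \<times> letter \<Rightarrow> (nat \<times> letter) list \<Rightarrow> ltl" where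
  "pattern_of b (d, c) [] = Xpow (d - b) (Atom c)"
| "pattern_of b (d, c) (x # L) = Xpow (d - b) (Conj (Atom c) (pattern_of d x L))"

lemma is_pattern_pattern_of: "is_pattern (pattern_of b x L)"
  by (induction b x L rule: pattern_of.induct) (auto intro: is_pattern.intros)

lemma fsize_pattern_of:
  "sorted (map fst (x # L)) \<Longrightarrow> b \<le> fst x \<Longrightarrow>
   fsize (pattern_of b x L) + b = fst (last (x # L)) + 2 * length L + 1"
  by (induction b x L rule: pattern_of.induct) (auto simp: fsize_Xpow)

lemma sat_pattern_of:
  assumes "sorted (map fst (x # L))" "b \<le> fst x" "1 \<le> i" "i + b \<le> length w"
  shows "sat w (i + b) (pattern_of b x L) \<longleftrightarrow> sat_constraints w i (x # L)"
  using assms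
proof (induction b x L rule: pattern_of.induct)
  case (1 b d c)
  then show ?case by (auto simp: sat_Xpow sat_constraints_def)
next
  case (2 b d c x L)
  have "sat w (i + b) (pattern_of b (d, c) (x # L)) \<longleftrightarrow>
      i + d \<le> length w \<and> w ! (i + d - 1) = c \<and> sat w (i + d) (pattern_of d x L)"
    using "2.prems" by (simp add: sat_Xpow)
  also have "\<dots> \<longleftrightarrow> i + d \<le> length w \<and> w ! (i + d - 1) = c \<and> sat_constraints w i (x # L)"
    using "2.IH" "2.prems"(1,3) by auto
  finally show ?case by (simp add: sat_constraints_def)
qed

theorem lemma1:
  shows "\<exists>P. is_pattern P
             \<and> (\<forall>w i. w \<noteq> [] \<and> 1 \<le> i \<and> i \<le> length w \<longrightarrow> (sat w i P \<longleftrightarrow> sat w i \<phi>))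
             \<and> fsize P \<le> fsize \<phi>"
proof -
  obtain x L where xL: "sort_key fst (constraints \<phi>) = x # L"
    using constraints_nonempty[of \<phi>] by (metis length_0_conv length_sort neq_Nil_conv)
  have sorted: "sorted (map fst (x # L))"
    by (metis xL sorted_sort_key)
  have set_xL: "set (x # L) = set (constraints \<phi>)"
    and length_xL: "length (x # L) = length (constraints \<phi>)"
    by (metis xL set_sort, metis xL length_sort)
  have sem: "sat w i (pattern_of 0 x L) \<longleftrightarrow> sat w i \<phi>" if "1 \<le> i" "i \<le> length w" for w i
  proof -
    have "sat_constraints w i (x # L) \<longleftrightarrow> sat_constraints w i (constraints \<phi>)"
      unfolding sat_constraints_def set_xL ..
    then show ?thesis
      using sat_pattern_of[OF sorted, of 0 i w] sat_iff_sat_constraints[OF that, of \<phi>] that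
      by simp
  qed
  have "fst (last (x # L)) \<le> next_depth \<phi>"
    using set_xL last_in_set constraint_offset_le_next_depth by (metis list.discI prod.collapse)
  then have "fsize (pattern_of 0 x L) \<le> fsize \<phi>"
    using fsize_pattern_of[OF sorted, of 0] next_depth_length_constraints_le_fsize[of \<phi>] length_xL
    by simp
  then show ?thesis
    using is_pattern_pattern_of sem by blast
qed

end
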